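(* Let $G$ be a finite simple graph on $[d]$. Then $L_G : x_{\emptyset}^{\infty}=J_G : x_{\emptyset}^{\infty}=\langle [I_G]_2\rangle : x_{\emptyset}^{\infty}=I_G.$
   Context: A stable set of $G$ is a subset of $[d]$ with no edge of $G$ (including $\emptyset$ and singletons); $S(G)$ is the set of stable sets; $R[G]=\mathbb{K}[x_S : S\in S(G)]$ over a field $\mathbb{K}$, all variables of degree $1$. $I_G$ is the kernel of $\pi:R[G]\to\mathbb{K}[t_1,\dots,t_d,s]$, $\pi(x_S)=s\prod_{j\in S}t_j$. $\langle [I_G]_2\rangle$ is the ideal generated by the degree-$2$ homogeneous elements of $I_G$. $J_G$ is the ideal generated by all binomials $x_{S_1}x_{S_2}-x_{S_3}x_{S_4}$ with $S_i\in S(G)$, $S_1\cap S_2=S_3\cap S_4=\emptyset$, $S_1\cup S_2=S_3\cup S_4$ (i.e. ${\bf x}_f-{\bf x}_g$ for $2$-colorings $f,g$ of a common induced subgraph, where ${\bf x}_f=x_{f^{-1}(1)}x_{f^{-1}(2)}$). $L_G=\langle x_{S\setminus\{i\}}x_{\{i\}}-x_Sx_\emptyset : i\in S\in S(G),\ |S|\ge2\rangle$. For an ideal $I$ and polynomial $h$, $I:h^\infty=\{p : h^np\in I \text{ for some } n>0\}$. *)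

theory Defs
  imports "HOL-Library.Poly_Mapping"
begin

text \<open>The ring R[G] has variables x_S indexed by stable sets S (type nat set);
it is the subring of polynomials whose monomials only involve stable sets.
The target ring K[t_1..t_d, s] uses variables of type nat option:
None is s, Some j is t_j.\<close>

definition simple_graph_on :: "nat \<Rightarrow> nat set set \<Rightarrow> bool" where
  "simple_graph_on d E \<longleftrightarrow>
     (\<forall>e\<in>E. \<exists>i j. e = {i, j} \<and> i \<noteq> j \<and> i \<in> {1..d} \<and> j \<in> {1..d})"

definition stable :: "nat \<Rightarrow> nat set set \<Rightarrow> nat set \<Rightarrow> bool" where
  "stable d E S \<longleftrightarrow> S \<subseteq> {1..d} \<and> (\<forall>e\<in>E. \<not> e \<subseteq> S)"

type_synonym ('v, 'k) mpoly = "('v \<Rightarrow>\<^sub>0 nat) \<Rightarrow>\<^sub>0 'k"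

definition var :: "'v \<Rightarrow> ('v, 'k::field) mpoly" where
  "var v = Poly_Mapping.single (Poly_Mapping.single v 1) 1"

definition const :: "'k \<Rightarrow> ('v, 'k::field) mpoly" where
  "const c = Poly_Mapping.single 0 c"

definition RG :: "nat \<Rightarrow> nat set set \<Rightarrow> (nat set, 'k::field) mpoly set" where
  "RG d E = {p. \<forall>m\<in>Poly_Mapping.keys p. Poly_Mapping.keys m \<subseteq> Collect (stable d E)}"

definition subst :: "('v \<Rightarrow> ('w, 'k::field) mpoly) \<Rightarrow> ('v, 'k) mpoly \<Rightarrow> ('w, 'k) mpoly" where
  "subst f p = (\<Sum>m\<in>Poly_Mapping.keys p. const (Poly_Mapping.lookup p m) * (\<Prod>v\<in>Poly_Mapping.keys m. f v ^ Poly_Mapping.lookup m v))"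

definition piG :: "(nat set, 'k::field) mpoly \<Rightarrow> (nat option, 'k) mpoly" where
  "piG = subst (\<lambda>S. var None * (\<Prod>j\<in>S. var (Some j)))"

definition IG :: "nat \<Rightarrow> nat set set \<Rightarrow> (nat set, 'k::field) mpoly set" where
  "IG d E = {p \<in> RG d E. piG p = 0}"

definition mdeg :: "('v \<Rightarrow>\<^sub>0 nat) \<Rightarrow> nat" where
  "mdeg m = (\<Sum>v\<in>Poly_Mapping.keys m. Poly_Mapping.lookup m v)"

definition homog_part :: "nat \<Rightarrow> ('v, 'k::field) mpoly set \<Rightarrow> ('v, 'k) mpoly set" where
  "homog_part n A = {p \<in> A. \<forall>m\<in>Poly_Mapping.keys p. mdeg m = n}"

inductive_set ideal_gen :: "('v, 'k::field) mpoly set \<Rightarrow> ('v, 'k) mpoly set \<Rightarrow> ('v, 'k) mpoly set"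
  for A T where
  gen: "t \<in> T \<Longrightarrow> t \<in> ideal_gen A T"
| zero: "0 \<in> ideal_gen A T"
| add: "p \<in> ideal_gen A T \<Longrightarrow> q \<in> ideal_gen A T \<Longrightarrow> p + q \<in> ideal_gen A T"
| mult: "r \<in> A \<Longrightarrow> p \<in> ideal_gen A T \<Longrightarrow> r * p \<in> ideal_gen A T"

definition saturation :: "('v, 'k::field) mpoly set \<Rightarrow> ('v, 'k) mpoly set \<Rightarrow> ('v, 'k) mpoly \<Rightarrow> ('v, 'k) mpoly set" where
  "saturation A I h = {p \<in> A. \<exists>n>0. h ^ n * p \<in> I}"

definition JG_gens :: "nat \<Rightarrow> nat set set \<Rightarrow> (nat set, 'k::field) mpoly set" where
  "JG_gens d E = {var S1 * var S2 - var S3 * var S4 | S1 S2 S3 S4.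
     stable d E S1 \<and> stable d E S2 \<and> stable d E S3 \<and> stable d E S4 \<and>
     S1 \<inter> S2 = {} \<and> S3 \<inter> S4 = {} \<and> S1 \<union> S2 = S3 \<union> S4}"

definition LG_gens :: "nat \<Rightarrow> nat set set \<Rightarrow> (nat set, 'k::field) mpoly set" where
  "LG_gens d E = {var (S - {i}) * var {i} - var S * var {} | S i.
     stable d E S \<and> i \<in> S \<and> card S \<ge> 2}"

definition JG :: "nat \<Rightarrow> nat set set \<Rightarrow> (nat set, 'k::field) mpoly set" where
  "JG d E = ideal_gen (RG d E) (JG_gens d E)"

definition LG :: "nat \<Rightarrow> nat set set \<Rightarrow> (nat set, 'k::field) mpoly set" where
  "LG d E = ideal_gen (RG d E) (LG_gens d E)"

end

theory Submission
  imports Defs "HOL-Library.Option_ord"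
begin

text \<open>The chain of inclusions
L_G \<subseteq> J_G \<subseteq> \<langle>[I_G]_2\<rangle> \<subseteq> I_G is immediate, and I_G is saturated with
respect to x_\<emptyset> because \<pi>(x_\<emptyset>) = s is a nonzerodivisor of the
polynomial ring K[t, s]. So everything reduces to I_G \<subseteq> L_G : x_\<emptyset>^\<infinity>.
The generators of L_G give, by induction on |S|,
x_\<emptyset>^(|S|-1) x_S \<equiv> \<Prod>_{j \<in> S} x_{j} modulo L_G; hence for every p \<in> R[G] some
x_\<emptyset>^N p is congruent modulo L_G to a polynomial q in the variables x_\<emptyset>
and x_{j} alone. On such polynomials \<pi> is injective, because the monomial
x_\<emptyset>^a \<Prod> x_{j}^(b_j) is sent to s^(a + \<Sum> b_j) \<Prod> t_j^(b_j). Thus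
p \<in> I_G forces \<pi>(q) = 0, q = 0 and x_\<emptyset>^N p \<in> L_G.\<close>

section \<open>Polynomials and substitution\<close>

lemma poly_mapping_sum_single:
  "(p :: 'a \<Rightarrow>\<^sub>0 'b::comm_monoid_add)
     = (\<Sum>k\<in>Poly_Mapping.keys p. Poly_Mapping.single k (Poly_Mapping.lookup p k))"
proof (rule poly_mapping_eqI)
  fix x
  have "Poly_Mapping.lookup (\<Sum>k\<in>Poly_Mapping.keys p. Poly_Mapping.single k (Poly_Mapping.lookup p k)) x
      = (\<Sum>k\<in>Poly_Mapping.keys p. if k = x then Poly_Mapping.lookup p k else 0)"
    by (simp add: lookup_sum lookup_single when_def)
  also have "\<dots> = Poly_Mapping.lookup p x"
    by (simp add: sum.delta in_keys_iff)
  finally show "Poly_Mapping.lookup p x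
      = Poly_Mapping.lookup (\<Sum>k\<in>Poly_Mapping.keys p. Poly_Mapping.single k (Poly_Mapping.lookup p k)) x"
    by simp
qed

lemma single_one_power:
  "Poly_Mapping.single k (1::'b::comm_semiring_1) ^ n
     = Poly_Mapping.single (\<Sum>i<n. (k::'a::comm_monoid_add)) 1"
  by (induction n) (simp_all add: mult_single add.commute)

lemma prod_single_one:
  "(\<Prod>i\<in>A. Poly_Mapping.single (k i) (1::'b::comm_semiring_1))
     = Poly_Mapping.single (\<Sum>i\<in>A. (k i::'a::comm_monoid_add)) 1"
  by (induction A rule: infinite_finite_induct) (simp_all add: mult_single)

lemma sum_single_Suc_0: "(\<Sum>i<n. Poly_Mapping.single v (Suc 0)) = Poly_Mapping.single v n"
  by (induction n) (simp_all add: single_add[symmetric])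

lemma const_mult: "const (a * b) = (const a * const b :: ('v, 'k::field) mpoly)"
  by (simp add: const_def mult_single)

lemma const_add: "const (a + b) = (const a + const b :: ('v, 'k::field) mpoly)"
  by (simp add: const_def single_add)

lemma const_0 [simp]: "const 0 = (0 :: ('v, 'k::field) mpoly)"
  by (simp add: const_def)

lemma const_1 [simp]: "const 1 = (1 :: ('v, 'k::field) mpoly)"
  by (simp add: const_def)

lemma var_neq_0 [simp]: "var v \<noteq> (0 :: ('v, 'k::field) mpoly)"
  by (metis var_def lookup_single_eq lookup_zero one_neq_zero)

definition eval_monom :: "('v \<Rightarrow> ('w, 'k::field) mpoly) \<Rightarrow> ('v \<Rightarrow>\<^sub>0 nat) \<Rightarrow> ('w, 'k) mpoly" where
  "eval_monom f m = (\<Prod>v\<in>Poly_Mapping.keys m. f v ^ Poly_Mapping.lookup m v)"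

lemma eval_monom_superset:
  "finite A \<Longrightarrow> Poly_Mapping.keys m \<subseteq> A
     \<Longrightarrow> eval_monom f m = (\<Prod>v\<in>A. f v ^ Poly_Mapping.lookup m v)"
  unfolding eval_monom_def by (rule prod.mono_neutral_left) (auto simp: in_keys_iff)

lemma eval_monom_0 [simp]: "eval_monom f 0 = 1"
  by (simp add: eval_monom_def)

lemma eval_monom_add: "eval_monom f (m1 + m2) = eval_monom f m1 * eval_monom f m2"
proof -
  let ?A = "Poly_Mapping.keys m1 \<union> Poly_Mapping.keys m2"
  have "eval_monom f (m1 + m2) = (\<Prod>v\<in>?A. f v ^ Poly_Mapping.lookup (m1 + m2) v)"
    by (rule eval_monom_superset) (simp_all add: keys_add)
  also have "\<dots> = (\<Prod>v\<in>?A. f v ^ Poly_Mapping.lookup m1 v) * (\<Prod>v\<in>?A. f v ^ Poly_Mapping.lookup m2 v)"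
    by (simp add: lookup_add power_add prod.distrib)
  also have "\<dots> = eval_monom f m1 * eval_monom f m2"
    using eval_monom_superset[of ?A m1 f] eval_monom_superset[of ?A m2 f] by simp
  finally show ?thesis .
qed

lemma eval_monom_var: "eval_monom var m = Poly_Mapping.single m (1::'k::field)"
proof -
  have "eval_monom var m = (\<Prod>v\<in>Poly_Mapping.keys m.
      Poly_Mapping.single (\<Sum>i<Poly_Mapping.lookup m v. Poly_Mapping.single v 1) (1::'k))"
    unfolding eval_monom_def var_def by (simp add: single_one_power)
  also have "\<dots> = Poly_Mapping.single
      (\<Sum>v\<in>Poly_Mapping.keys m. Poly_Mapping.single v (Poly_Mapping.lookup m v)) 1"
    by (simp add: prod_single_one sum_single_Suc_0)
  also have "\<dots> = Poly_Mapping.single m 1"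
    by (simp flip: poly_mapping_sum_single)
  finally show ?thesis .
qed

lemma subst_eq_sum_superset:
  "finite A \<Longrightarrow> Poly_Mapping.keys p \<subseteq> A
     \<Longrightarrow> subst f p = (\<Sum>m\<in>A. const (Poly_Mapping.lookup p m) * eval_monom f m)"
  unfolding subst_def eval_monom_def[symmetric]
  by (rule sum.mono_neutral_left) (auto simp: in_keys_iff)

lemma subst_0 [simp]: "subst f 0 = 0"
  by (simp add: subst_def)

lemma subst_add: "subst f (p + q) = subst f p + subst f q"
proof -
  let ?A = "Poly_Mapping.keys p \<union> Poly_Mapping.keys q"
  have "subst f (p + q) = (\<Sum>m\<in>?A. const (Poly_Mapping.lookup (p + q) m) * eval_monom f m)"
    by (rule subst_eq_sum_superset) (simp_all add: keys_add)
  also have "\<dots> = (\<Sum>m\<in>?A. const (Poly_Mapping.lookup p m) * eval_monom f m)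
                + (\<Sum>m\<in>?A. const (Poly_Mapping.lookup q m) * eval_monom f m)"
    by (simp add: lookup_add const_add distrib_right sum.distrib)
  also have "\<dots> = subst f p + subst f q"
    using subst_eq_sum_superset[of ?A p f] subst_eq_sum_superset[of ?A q f] by simp
  finally show ?thesis .
qed

lemma subst_single: "subst f (Poly_Mapping.single m c) = const c * eval_monom f m"
  by (subst subst_eq_sum_superset[of "{m}"]) auto

lemma subst_sum: "subst f (sum g A) = (\<Sum>a\<in>A. subst f (g a))"
  by (induction A rule: infinite_finite_induct) (simp_all add: subst_add)

lemma subst_mult: "subst f (p * q) = subst f p * subst f q"
proof -
  have "p * q = (\<Sum>m\<in>Poly_Mapping.keys p. Poly_Mapping.single m (Poly_Mapping.lookup p m))
              * (\<Sum>n\<in>Poly_Mapping.keys q. Poly_Mapping.single n (Poly_Mapping.lookup q n))"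
    by (simp flip: poly_mapping_sum_single)
  also have "\<dots> = (\<Sum>m\<in>Poly_Mapping.keys p. \<Sum>n\<in>Poly_Mapping.keys q.
      Poly_Mapping.single (m + n) (Poly_Mapping.lookup p m * Poly_Mapping.lookup q n))"
    by (simp add: sum_product mult_single)
  finally have "subst f (p * q) = (\<Sum>m\<in>Poly_Mapping.keys p. \<Sum>n\<in>Poly_Mapping.keys q.
      (const (Poly_Mapping.lookup p m) * eval_monom f m) * (const (Poly_Mapping.lookup q n) * eval_monom f n))"
    by (simp add: subst_sum subst_single const_mult eval_monom_add mult_ac)
  also have "\<dots> = subst f p * subst f q"
    by (simp add: subst_def eval_monom_def sum_product)
  finally show ?thesis .
qed

lemma subst_1 [simp]: "subst f 1 = 1"
  using subst_single[of f 0 1] by simp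

lemma subst_power: "subst f (p ^ n) = subst f p ^ n"
  by (induction n) (simp_all add: subst_mult)

lemma subst_diff: "subst f (p - q) = subst f p - subst f q"
  by (metis add_diff_cancel diff_add_cancel subst_add)

lemma subst_var: "subst f (var v) = f v"
  by (simp add: var_def subst_single eval_monom_def)

lemma mpoly_expansion:
  "p = (\<Sum>m\<in>Poly_Mapping.keys p. const (Poly_Mapping.lookup p m)
         * (\<Prod>v\<in>Poly_Mapping.keys m. var v ^ Poly_Mapping.lookup m v))"
proof -
  have "subst var p = (\<Sum>m\<in>Poly_Mapping.keys p. Poly_Mapping.single m (Poly_Mapping.lookup p m))"
    unfolding subst_def eval_monom_def[symmetric] eval_monom_var
    by (simp add: const_def mult_single)
  then have "subst var p = p"
    by (simp flip: poly_mapping_sum_single)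
  then show ?thesis
    unfolding subst_def by simp
qed

definition monom_map :: "('v \<Rightarrow> ('w \<Rightarrow>\<^sub>0 nat)) \<Rightarrow> ('v \<Rightarrow>\<^sub>0 nat) \<Rightarrow> ('w \<Rightarrow>\<^sub>0 nat)" where
  "monom_map e m = (\<Sum>v\<in>Poly_Mapping.keys m. \<Sum>i<Poly_Mapping.lookup m v. e v)"

lemma lookup_monom_map:
  "Poly_Mapping.lookup (monom_map e m) w
     = (\<Sum>v\<in>Poly_Mapping.keys m. Poly_Mapping.lookup m v * Poly_Mapping.lookup (e v) w)"
  by (simp add: monom_map_def lookup_sum)

lemma lookup_subst_monomials:
  assumes "\<And>v. f v = Poly_Mapping.single (e v) (1::'k::field)"
  shows "Poly_Mapping.lookup (subst f p) w
           = (\<Sum>m\<in>{m\<in>Poly_Mapping.keys p. monom_map e m = w}. Poly_Mapping.lookup p m)"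
proof -
  have "eval_monom f m = Poly_Mapping.single (monom_map e m) 1" for m
    unfolding eval_monom_def assms by (simp add: single_one_power prod_single_one monom_map_def)
  then have "subst f p = (\<Sum>m\<in>Poly_Mapping.keys p.
      Poly_Mapping.single (monom_map e m) (Poly_Mapping.lookup p m))"
    unfolding subst_def eval_monom_def[symmetric] by (simp add: const_def mult_single)
  then have "Poly_Mapping.lookup (subst f p) w = (\<Sum>m\<in>Poly_Mapping.keys p.
      if monom_map e m = w then Poly_Mapping.lookup p m else 0)"
    by (simp add: lookup_sum lookup_single when_def)
  also have "\<dots> = (\<Sum>m\<in>{m\<in>Poly_Mapping.keys p. monom_map e m = w}. Poly_Mapping.lookup p m)"
    by (simp add: sum.inter_filter)
  finally show ?thesis .
qed

lemma mdeg_superset: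
  "finite A \<Longrightarrow> Poly_Mapping.keys m \<subseteq> A \<Longrightarrow> mdeg m = (\<Sum>v\<in>A. Poly_Mapping.lookup m v)"
  unfolding mdeg_def by (rule sum.mono_neutral_left) (auto simp: in_keys_iff)

lemma mdeg_add: "mdeg (m1 + m2) = mdeg m1 + mdeg m2"
proof -
  let ?A = "Poly_Mapping.keys m1 \<union> Poly_Mapping.keys m2"
  have "mdeg (m1 + m2) = (\<Sum>v\<in>?A. Poly_Mapping.lookup (m1 + m2) v)"
    by (rule mdeg_superset) (simp_all add: keys_add)
  also have "\<dots> = (\<Sum>v\<in>?A. Poly_Mapping.lookup m1 v) + (\<Sum>v\<in>?A. Poly_Mapping.lookup m2 v)"
    by (simp add: lookup_add sum.distrib)
  also have "\<dots> = mdeg m1 + mdeg m2"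
    using mdeg_superset[of ?A m1] mdeg_superset[of ?A m2] by simp
  finally show ?thesis .
qed

lemma mdeg_single [simp]: "mdeg (Poly_Mapping.single v n) = n"
  by (simp add: mdeg_def)

lemma mdeg_keys_var_binomial:
  "m \<in> Poly_Mapping.keys (var a * var b - var c * var e :: ('v, 'k::field) mpoly) \<Longrightarrow> mdeg m = 2"
  using keys_diff[of "var a * var b :: ('v, 'k) mpoly" "var c * var e"]
  by (auto simp: var_def mult_single mdeg_add)

section \<open>Subrings and ideals\<close>

definition polys_in :: "'v set \<Rightarrow> ('v, 'k::field) mpoly set" where
  "polys_in V = {p. \<forall>m\<in>Poly_Mapping.keys p. Poly_Mapping.keys m \<subseteq> V}"

lemma RG_eq_polys_in: "RG d E = polys_in (Collect (stable d E))"
  by (simp add: RG_def polys_in_def)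

lemma polys_in_mono: "V \<subseteq> W \<Longrightarrow> polys_in V \<subseteq> polys_in W"
  unfolding polys_in_def by blast

lemma polys_in_const [simp]: "const c \<in> polys_in V"
  by (simp add: polys_in_def const_def)

lemma polys_in_1 [simp]: "1 \<in> polys_in V"
  using polys_in_const[of 1 V] by simp

lemma polys_in_var: "v \<in> V \<Longrightarrow> var v \<in> polys_in V"
  by (simp add: polys_in_def var_def)

lemma polys_in_add: "p \<in> polys_in V \<Longrightarrow> q \<in> polys_in V \<Longrightarrow> p + q \<in> polys_in V"
  unfolding polys_in_def using keys_add[of p q] by blast

lemma polys_in_uminus: "p \<in> polys_in V \<Longrightarrow> - p \<in> polys_in V"
  unfolding polys_in_def by simp

lemma polys_in_diff: "p \<in> polys_in V \<Longrightarrow> q \<in> polys_in V \<Longrightarrow> p - q \<in> polys_in V"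
  unfolding polys_in_def using keys_diff[of p q] by blast

lemma polys_in_mult:
  assumes "p \<in> polys_in V" and "q \<in> polys_in V"
  shows "p * q \<in> polys_in V"
  unfolding polys_in_def mem_Collect_eq
proof
  fix m assume "m \<in> Poly_Mapping.keys (p * q)"
  then obtain a b where "m = a + b" "a \<in> Poly_Mapping.keys p" "b \<in> Poly_Mapping.keys q"
    using keys_mult by blast
  with assms show "Poly_Mapping.keys m \<subseteq> V"
    using keys_add[of a b] unfolding polys_in_def by blast
qed

lemma polys_in_power: "p \<in> polys_in V \<Longrightarrow> p ^ n \<in> polys_in V"
  by (induction n) (simp_all add: polys_in_mult)

lemma polys_in_prod: "(\<And>a. a \<in> A \<Longrightarrow> g a \<in> polys_in V) \<Longrightarrow> prod g A \<in> polys_in V"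
  by (induction A rule: infinite_finite_induct) (simp_all add: polys_in_mult)

lemma ideal_gen_least:
  assumes "T \<subseteq> J" and "0 \<in> J" and "\<And>p q. p \<in> J \<Longrightarrow> q \<in> J \<Longrightarrow> p + q \<in> J"
    and "\<And>r p. r \<in> A \<Longrightarrow> p \<in> J \<Longrightarrow> r * p \<in> J"
  shows "ideal_gen A T \<subseteq> J"
proof
  fix p assume "p \<in> ideal_gen A T"
  then show "p \<in> J"
    by (induction rule: ideal_gen.induct) (use assms in auto)
qed

lemma ideal_gen_mono: "T \<subseteq> T' \<Longrightarrow> ideal_gen A T \<subseteq> ideal_gen A T'"
  by (rule ideal_gen_least) (auto intro: ideal_gen.intros)

lemma ideal_gen_diff:
  assumes "p \<in> ideal_gen (polys_in V) T" and "q \<in> ideal_gen (polys_in V) T"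
  shows "p - q \<in> ideal_gen (polys_in V) T"
proof -
  have "-1 \<in> polys_in V"
    by (intro polys_in_uminus polys_in_1)
  then have "p + (-1) * q \<in> ideal_gen (polys_in V) T"
    using assms by (intro ideal_gen.add ideal_gen.mult)
  then show ?thesis by simp
qed

lemma saturation_mono: "I \<subseteq> J \<Longrightarrow> saturation A I h \<subseteq> saturation A J h"
  unfolding saturation_def by blast

section \<open>Stable sets and the toric map\<close>

lemma stable_subset: "stable d E S \<Longrightarrow> T \<subseteq> S \<Longrightarrow> stable d E T"
  unfolding stable_def by blast

lemma stable_finite: "stable d E S \<Longrightarrow> finite S"
  unfolding stable_def using finite_subset by blast

lemma stable_empty: "simple_graph_on d E \<Longrightarrow> stable d E {}"
  unfolding simple_graph_on_def stable_def by fastforce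

definition pi_exp :: "nat set \<Rightarrow> (nat option \<Rightarrow>\<^sub>0 nat)" where
  "pi_exp S = Poly_Mapping.single None 1 + (\<Sum>j\<in>S. Poly_Mapping.single (Some j) 1)"

lemma piG_eq_subst: "piG = subst (\<lambda>S. Poly_Mapping.single (pi_exp S) (1::'k::field))"
  by (simp add: piG_def var_def prod_single_one mult_single pi_exp_def)

lemma piG_0 [simp]: "piG 0 = 0"
  by (simp add: piG_def)

lemma piG_add: "piG (p + q) = piG p + piG q"
  by (simp add: piG_def subst_add)

lemma piG_diff: "piG (p - q) = piG p - piG q"
  by (simp add: piG_def subst_diff)

lemma piG_mult: "piG (p * q) = piG p * piG q"
  by (simp add: piG_def subst_mult)

lemma piG_power: "piG (p ^ n) = piG p ^ n"
  by (simp add: piG_def subst_power)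

lemma piG_var: "piG (var S) = var None * (\<Prod>j\<in>S. var (Some j))"
  by (simp add: piG_def subst_var)

section \<open>The ideals L_G, J_G and I_G\<close>

lemma piG_var_mult_var:
  assumes "S1 \<inter> S2 = {}" and "finite S1" and "finite S2"
  shows "piG (var S1 * var S2) = var None ^ 2 * (\<Prod>j\<in>S1 \<union> S2. var (Some j))"
  using assms by (simp add: piG_mult piG_var prod.union_disjoint power2_eq_square mult_ac)

lemma LG_gens_subset_JG_gens: "LG_gens d E \<subseteq> JG_gens d E"
proof
  fix x assume "x \<in> LG_gens d E"
  then obtain S i where x: "x = var (S - {i}) * var {i} - var S * var {}"
    and S: "stable d E S" and i: "i \<in> S"
    unfolding LG_gens_def by blast
  have "stable d E (S - {i})" "stable d E {i}" "stable d E {}"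
    using S i stable_subset by blast+
  with S i show "x \<in> JG_gens d E"
    unfolding JG_gens_def x by blast
qed

lemma JG_gens_subset_homog_IG: "JG_gens d E \<subseteq> homog_part 2 (IG d E)"
proof
  fix x assume "x \<in> JG_gens d E"
  then obtain S1 S2 S3 S4 where x: "x = var S1 * var S2 - var S3 * var S4"
    and st: "stable d E S1" "stable d E S2" "stable d E S3" "stable d E S4"
    and disj: "S1 \<inter> S2 = {}" "S3 \<inter> S4 = {}" and un: "S1 \<union> S2 = S3 \<union> S4"
    unfolding JG_gens_def by blast
  have "x \<in> RG d E"
    unfolding x RG_eq_polys_in using st by (intro polys_in_diff polys_in_mult polys_in_var) auto
  moreover have "piG x = 0"
    unfolding x piG_diff using disj un st stable_finite by (simp add: piG_var_mult_var)
  moreover have "mdeg m = 2" if "m \<in> Poly_Mapping.keys x" for m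
    using that unfolding x by (rule mdeg_keys_var_binomial)
  ultimately show "x \<in> homog_part 2 (IG d E)"
    unfolding homog_part_def IG_def by blast
qed

lemma ideal_gen_homog_IG_subset_IG: "ideal_gen (RG d E) (homog_part 2 (IG d E)) \<subseteq> IG d E"
  by (rule ideal_gen_least)
     (auto simp: homog_part_def IG_def RG_eq_polys_in piG_add piG_mult polys_in_add polys_in_mult
           polys_in_const[of 0, simplified])

lemma LG_subset_IG: "LG d E \<subseteq> IG d E"
proof -
  have "LG d E \<subseteq> JG d E"
    unfolding LG_def JG_def by (rule ideal_gen_mono[OF LG_gens_subset_JG_gens])
  also have "\<dots> \<subseteq> ideal_gen (RG d E) (homog_part 2 (IG d E))"
    unfolding JG_def by (rule ideal_gen_mono[OF JG_gens_subset_homog_IG])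
  also have "\<dots> \<subseteq> IG d E"
    by (rule ideal_gen_homog_IG_subset_IG)
  finally show ?thesis .
qed

lemma LG_subset_RG: "LG d E \<subseteq> RG d E"
  using LG_subset_IG by (auto simp: IG_def)

text \<open>K[t, s] is an integral domain: the idom instance of poly_mapping needs a linear
order on the variables nat option, which HOL-Library.Option_ord supplies.\<close>

lemma saturation_IG: "saturation (RG d E) (IG d E) (var {}) \<subseteq> (IG d E :: (nat set, 'k::field) mpoly set)"
proof
  fix p :: "(nat set, 'k) mpoly"
  assume "p \<in> saturation (RG d E) (IG d E) (var {})"
  then obtain n where p: "p \<in> RG d E" and "var {} ^ n * p \<in> IG d E"
    unfolding saturation_def by blast
  then have "var None ^ n * piG p = 0"
    by (simp add: IG_def piG_mult piG_power piG_var)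
  then have "piG p = 0"
    by simp
  with p show "p \<in> IG d E"
    by (simp add: IG_def)
qed

section \<open>Polynomials in x_\<emptyset> and the x_{j}\<close>

definition small_sets :: "nat set set" where
  "small_sets = {S. S = {} \<or> (\<exists>j. S = {j})}"

lemma lookup_pi_exp_None: "Poly_Mapping.lookup (pi_exp S) None = 1"
  by (simp add: pi_exp_def lookup_add lookup_sum lookup_single)

lemma lookup_pi_exp_Some:
  "S \<in> small_sets \<Longrightarrow> Poly_Mapping.lookup (pi_exp S) (Some j) = (if S = {j} then 1 else 0)"
  by (auto simp: small_sets_def pi_exp_def lookup_add lookup_sum lookup_single when_def
      split: if_splits)

lemma lookup_monom_map_pi_exp_None: "Poly_Mapping.lookup (monom_map pi_exp m) None = mdeg m"
  by (simp add: lookup_monom_map lookup_pi_exp_None mdeg_def)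

lemma lookup_monom_map_pi_exp_Some:
  assumes "Poly_Mapping.keys m \<subseteq> small_sets"
  shows "Poly_Mapping.lookup (monom_map pi_exp m) (Some j) = Poly_Mapping.lookup m {j}"
proof -
  have "Poly_Mapping.lookup (monom_map pi_exp m) (Some j)
      = (\<Sum>v\<in>Poly_Mapping.keys m. if v = {j} then Poly_Mapping.lookup m v else 0)"
    unfolding lookup_monom_map
  proof (rule sum.cong)
    fix v assume "v \<in> Poly_Mapping.keys m"
    with assms have "v \<in> small_sets" by blast
    then show "Poly_Mapping.lookup m v * Poly_Mapping.lookup (pi_exp v) (Some j)
        = (if v = {j} then Poly_Mapping.lookup m v else 0)"
      by (simp add: lookup_pi_exp_Some)
  qed simp
  also have "\<dots> = Poly_Mapping.lookup m {j}"
    by (simp add: sum.delta in_keys_iff)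
  finally show ?thesis .
qed

lemma monom_map_pi_exp_inj:
  assumes k1: "Poly_Mapping.keys m1 \<subseteq> small_sets" and k2: "Poly_Mapping.keys m2 \<subseteq> small_sets"
    and eq: "monom_map pi_exp m1 = monom_map pi_exp m2"
  shows "m1 = m2"
proof -
  have off_empty: "Poly_Mapping.lookup m1 v = Poly_Mapping.lookup m2 v" if "v \<noteq> {}" for v
  proof (cases "v \<in> small_sets")
    case True
    with that obtain j where "v = {j}" by (auto simp: small_sets_def)
    then show ?thesis
      using eq lookup_monom_map_pi_exp_Some[OF k1, of j] lookup_monom_map_pi_exp_Some[OF k2, of j]
      by simp
  next
    case False
    with k1 k2 have "v \<notin> Poly_Mapping.keys m1" "v \<notin> Poly_Mapping.keys m2"
      by auto
    then show ?thesis
      by (simp add: in_keys_iff)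
  qed
  have mdeg_split: "mdeg m = mdeg (Poly_Mapping.update {} 0 m) + Poly_Mapping.lookup m {}"
    for m :: "nat set \<Rightarrow>\<^sub>0 nat"
  proof -
    have "m = Poly_Mapping.update {} 0 m + Poly_Mapping.single {} (Poly_Mapping.lookup m {})"
      by (rule poly_mapping_eqI) (simp add: lookup_update lookup_add lookup_single when_def)
    then show ?thesis
      by (metis mdeg_add mdeg_single)
  qed
  have "Poly_Mapping.update {} 0 m1 = Poly_Mapping.update {} 0 m2"
    using off_empty by (intro poly_mapping_eqI) (simp add: lookup_update)
  moreover have "mdeg m1 = mdeg m2"
    using eq lookup_monom_map_pi_exp_None[of m1] lookup_monom_map_pi_exp_None[of m2] by simp
  ultimately have "Poly_Mapping.lookup m1 {} = Poly_Mapping.lookup m2 {}"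
    using mdeg_split[of m1] mdeg_split[of m2] by simp
  with off_empty show ?thesis
    by (intro poly_mapping_eqI) (metis (full_types))
qed

lemma piG_eq_0_small_sets:
  assumes q: "q \<in> polys_in small_sets" and "piG q = (0 :: (nat option, 'k::field) mpoly)"
  shows "q = 0"
proof (rule ccontr)
  assume "q \<noteq> 0"
  then obtain m where m: "m \<in> Poly_Mapping.keys q"
    by fastforce
  have "{m' \<in> Poly_Mapping.keys q. monom_map pi_exp m' = monom_map pi_exp m} = {m}"
    using m q monom_map_pi_exp_inj unfolding polys_in_def by blast
  then have "Poly_Mapping.lookup (piG q) (monom_map pi_exp m) = Poly_Mapping.lookup q m"
    unfolding piG_eq_subst by (simp add: lookup_subst_monomials)
  with m \<open>piG q = 0\<close> show False
    by (simp add: in_keys_iff)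
qed

section \<open>Reduction modulo L_G\<close>

lemma LG_gens_subset_LG: "LG_gens d E \<subseteq> LG d E"
  unfolding LG_def by (blast intro: ideal_gen.gen)

lemma LG_add: "p \<in> LG d E \<Longrightarrow> q \<in> LG d E \<Longrightarrow> p + q \<in> LG d E"
  unfolding LG_def by (rule ideal_gen.add)

lemma LG_diff: "p \<in> LG d E \<Longrightarrow> q \<in> LG d E \<Longrightarrow> p - q \<in> LG d E"
  unfolding LG_def RG_eq_polys_in by (rule ideal_gen_diff)

lemma LG_mult: "r \<in> RG d E \<Longrightarrow> p \<in> LG d E \<Longrightarrow> r * p \<in> LG d E"
  unfolding LG_def by (rule ideal_gen.mult)

lemma var_empty_power_mult_var_LG:
  assumes "stable d E S" and "S \<noteq> {}"
  shows "var {} ^ (card S - 1) * var S - (\<Prod>j\<in>S. var {j}) \<in> (LG d E :: (nat set, 'k::field) mpoly set)"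
proof -
  have "finite S"
    using assms(1) by (rule stable_finite)
  then show ?thesis
    using assms(2,1)
  proof (induction S rule: finite_ne_induct)
    case (singleton i)
    then show ?case
      by (simp add: LG_def ideal_gen.zero)
  next
    case (insert i F)
    let ?x = "var {} ^ (card F - 1) :: (nat set, 'k) mpoly"
    have st: "stable d E F" "stable d E {i}" "stable d E {}"
      using insert.prems(1) stable_subset by blast+
    have IH: "?x * var F - (\<Prod>j\<in>F. var {j}) \<in> LG d E"
      using insert.IH st(1) insert.hyps(2) by blast
    have "var F * var {i} - var (insert i F) * var {} \<in> LG_gens d E"
      unfolding LG_gens_def using insert.prems(1) insert.hyps
      by (intro CollectI exI[of _ "insert i F"] exI[of _ i]) (simp add: Suc_leI card_gt_0_iff)
    then have gen: "var F * var {i} - var (insert i F) * var {} \<in> LG d E"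
      by (rule LG_gens_subset_LG[THEN subsetD])
    have "var {i} \<in> RG d E" "?x \<in> RG d E"
      using st unfolding RG_eq_polys_in by (auto intro: polys_in_power polys_in_var)
    then have combination: "var {i} * (?x * var F - (\<Prod>j\<in>F. var {j}))
        - ?x * (var F * var {i} - var (insert i F) * var {}) \<in> LG d E"
      by (rule LG_diff[OF LG_mult[OF _ IH] LG_mult[OF _ gen]])
    have power: "var {} ^ (card (insert i F) - 1) = ?x * var {}"
      using insert.hyps by (simp add: card_gt_0_iff flip: power_Suc2)
    have "var {} ^ (card (insert i F) - 1) * var (insert i F) - (\<Prod>j\<in>insert i F. var {j})
        = var {i} * (?x * var F - (\<Prod>j\<in>F. var {j}))
          - ?x * (var F * var {i} - var (insert i F) * var {})"
      unfolding power prod.insert[OF insert.hyps(1,3)] by (simp add: algebra_simps)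
    with combination show ?case
      by (simp only:)
  qed
qed

definition reducible_mod_LG :: "nat \<Rightarrow> nat set set \<Rightarrow> (nat set, 'k::field) mpoly \<Rightarrow> bool" where
  "reducible_mod_LG d E p \<longleftrightarrow>
     (\<exists>N q. q \<in> polys_in (small_sets \<inter> Collect (stable d E)) \<and> var {} ^ N * p - q \<in> LG d E)"

lemma reducible_mod_LGI:
  "q \<in> polys_in (small_sets \<inter> Collect (stable d E)) \<Longrightarrow> var {} ^ N * p - q \<in> LG d E
     \<Longrightarrow> reducible_mod_LG d E p"
  unfolding reducible_mod_LG_def by blast

lemma polys_in_small_stable_subset_RG: "polys_in (small_sets \<inter> Collect (stable d E)) \<subseteq> RG d E"
  unfolding RG_eq_polys_in by (rule polys_in_mono) blast

context
  fixes d :: nat and E :: "nat set set"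
  assumes empty_stable: "stable d E {}"
begin

lemma var_empty_power_small_stable: "var {} ^ N \<in> polys_in (small_sets \<inter> Collect (stable d E))"
  by (intro polys_in_power polys_in_var) (simp add: small_sets_def empty_stable)

lemma var_empty_power_RG: "var {} ^ N \<in> RG d E"
  using var_empty_power_small_stable polys_in_small_stable_subset_RG by blast

lemma reducible_mod_LG_add:
  assumes "reducible_mod_LG d E p" and "reducible_mod_LG d E r"
  shows "reducible_mod_LG d E (p + r)"
proof -
  from assms obtain N q M q' where q: "q \<in> polys_in (small_sets \<inter> Collect (stable d E))"
    and q': "q' \<in> polys_in (small_sets \<inter> Collect (stable d E))"
    and p: "var {} ^ N * p - q \<in> LG d E" and r: "var {} ^ M * r - q' \<in> LG d E"
    unfolding reducible_mod_LG_def by blast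
  have "var {} ^ M * (var {} ^ N * p - q) + var {} ^ N * (var {} ^ M * r - q') \<in> LG d E"
    by (rule LG_add[OF LG_mult[OF var_empty_power_RG p] LG_mult[OF var_empty_power_RG r]])
  moreover have "var {} ^ M * (var {} ^ N * p - q) + var {} ^ N * (var {} ^ M * r - q')
      = var {} ^ (N + M) * (p + r) - (var {} ^ M * q + var {} ^ N * q')"
    by (simp add: algebra_simps power_add)
  moreover have "var {} ^ M * q + var {} ^ N * q' \<in> polys_in (small_sets \<inter> Collect (stable d E))"
    by (intro polys_in_add polys_in_mult var_empty_power_small_stable q q')
  ultimately show ?thesis
    by (intro reducible_mod_LGI) simp_all
qed

lemma reducible_mod_LG_mult:
  assumes "reducible_mod_LG d E p" and "reducible_mod_LG d E r"
  shows "reducible_mod_LG d E (p * r)"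
proof -
  from assms obtain N q M q' where q: "q \<in> polys_in (small_sets \<inter> Collect (stable d E))"
    and q': "q' \<in> polys_in (small_sets \<inter> Collect (stable d E))"
    and p: "var {} ^ N * p - q \<in> LG d E" and r: "var {} ^ M * r - q' \<in> LG d E"
    unfolding reducible_mod_LG_def by blast
  have "q \<in> RG d E" "q' \<in> RG d E" "var {} ^ N * p - q \<in> RG d E"
    using q q' p polys_in_small_stable_subset_RG LG_subset_RG by blast+
  then have "(var {} ^ N * p - q) * (var {} ^ M * r - q') + q' * (var {} ^ N * p - q)
      + q * (var {} ^ M * r - q') \<in> LG d E"
    using p r by (intro LG_add LG_mult)
  moreover have "(var {} ^ N * p - q) * (var {} ^ M * r - q') + q' * (var {} ^ N * p - q)
      + q * (var {} ^ M * r - q') = var {} ^ (N + M) * (p * r) - q * q'"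
    by (simp add: algebra_simps power_add)
  moreover have "q * q' \<in> polys_in (small_sets \<inter> Collect (stable d E))"
    by (rule polys_in_mult[OF q q'])
  ultimately show ?thesis
    by (intro reducible_mod_LGI) simp_all
qed

lemma reducible_mod_LG_const: "reducible_mod_LG d E (const c)"
  by (rule reducible_mod_LGI[of "const c" _ _ 0]) (simp_all add: LG_def ideal_gen.zero)

lemma reducible_mod_LG_var:
  assumes S: "stable d E S"
  shows "reducible_mod_LG d E (var S)"
proof (cases "S = {}")
  case True
  then show ?thesis
    using var_empty_power_small_stable[of 1]
    by (intro reducible_mod_LGI[of "var {}" _ _ 0]) (simp_all add: LG_def ideal_gen.zero)
next
  case False
  have "{j} \<in> small_sets \<inter> Collect (stable d E)" if "j \<in> S" for j
    using S that stable_subset by (auto simp: small_sets_def)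
  then have "(\<Prod>j\<in>S. var {j}) \<in> polys_in (small_sets \<inter> Collect (stable d E))"
    by (intro polys_in_prod polys_in_var)
  then show ?thesis
    using var_empty_power_mult_var_LG[OF S False] by (rule reducible_mod_LGI)
qed

lemma reducible_mod_LG_RG:
  assumes p: "p \<in> RG d E"
  shows "reducible_mod_LG d E p"
proof -
  have reducible_sum: "reducible_mod_LG d E (sum g A)"
    if "\<And>a. a \<in> A \<Longrightarrow> reducible_mod_LG d E (g a)" for g :: "_ \<Rightarrow> (nat set, 'k::field) mpoly" and A
    using that
    by (induction A rule: infinite_finite_induct)
       (simp_all add: reducible_mod_LG_add reducible_mod_LG_const[of 0, simplified])
  have reducible_prod: "reducible_mod_LG d E (prod g A)"
    if "\<And>a. a \<in> A \<Longrightarrow> reducible_mod_LG d E (g a)" for g :: "_ \<Rightarrow> (nat set, 'k::field) mpoly" and A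
    using that
    by (induction A rule: infinite_finite_induct)
       (simp_all add: reducible_mod_LG_mult reducible_mod_LG_const[of 1, simplified])
  have reducible_power: "reducible_mod_LG d E (r ^ n)" if "reducible_mod_LG d E r" for r n
    using that
    by (induction n) (simp_all add: reducible_mod_LG_mult reducible_mod_LG_const[of 1, simplified])
  have "reducible_mod_LG d E (\<Sum>m\<in>Poly_Mapping.keys p. const (Poly_Mapping.lookup p m)
      * (\<Prod>v\<in>Poly_Mapping.keys m. var v ^ Poly_Mapping.lookup m v))"
  proof (intro reducible_sum reducible_mod_LG_mult reducible_mod_LG_const reducible_prod
      reducible_power reducible_mod_LG_var)
    fix m v assume "m \<in> Poly_Mapping.keys p" "v \<in> Poly_Mapping.keys m"
    with p show "stable d E v"
      unfolding RG_def by blast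
  qed
  then show ?thesis
    by (simp flip: mpoly_expansion)
qed

lemma IG_subset_saturation_LG:
  "(IG d E :: (nat set, 'k::field) mpoly set) \<subseteq> saturation (RG d E) (LG d E) (var {})"
proof
  fix p :: "(nat set, 'k) mpoly"
  assume "p \<in> IG d E"
  then have p: "p \<in> RG d E" "piG p = 0"
    by (simp_all add: IG_def)
  then obtain N q where q: "q \<in> polys_in (small_sets \<inter> Collect (stable d E))"
    and pq: "var {} ^ N * p - q \<in> LG d E"
    using reducible_mod_LG_RG unfolding reducible_mod_LG_def by blast
  have "piG (var {} ^ N * p - q) = 0"
    using pq LG_subset_IG by (auto simp: IG_def)
  with p have "piG q = 0"
    by (simp add: piG_diff piG_mult)
  moreover have "q \<in> polys_in small_sets"
    using q polys_in_mono[of "small_sets \<inter> Collect (stable d E)" small_sets] by blast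
  ultimately have "q = 0"
    by (rule piG_eq_0_small_sets[rotated])
  with pq have "var {} * (var {} ^ N * p) \<in> LG d E"
    by (intro LG_mult[OF var_empty_power_RG[of 1, simplified]]) simp
  with p show "p \<in> saturation (RG d E) (LG d E) (var {})"
    unfolding saturation_def by (auto simp flip: mult.assoc power_Suc)
qed

end

lemma saturations_eq_IG:
  assumes "stable d E {}"
  shows "saturation (RG d E) (LG d E) (var {})
           = saturation (RG d E) (JG d E :: (nat set, 'k::field) mpoly set) (var {})"
    and "saturation (RG d E) (JG d E) (var {})
           = saturation (RG d E) (ideal_gen (RG d E) (homog_part 2 (IG d E)))
               (var {} :: (nat set, 'k::field) mpoly)"
    and "saturation (RG d E) (ideal_gen (RG d E) (homog_part 2 (IG d E))) (var {})
           = (IG d E :: (nat set, 'k::field) mpoly set)"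
proof -
  let ?sat = "\<lambda>I :: (nat set, 'k) mpoly set. saturation (RG d E) I (var {})"
  let ?I2 = "ideal_gen (RG d E) (homog_part 2 (IG d E))"
  have L_J: "?sat (LG d E) \<subseteq> ?sat (JG d E)"
    unfolding LG_def JG_def by (intro saturation_mono ideal_gen_mono LG_gens_subset_JG_gens)
  moreover have J_I2: "?sat (JG d E) \<subseteq> ?sat ?I2"
    unfolding JG_def by (intro saturation_mono ideal_gen_mono JG_gens_subset_homog_IG)
  moreover have I2_IG: "?sat ?I2 \<subseteq> IG d E"
    using saturation_mono[OF ideal_gen_homog_IG_subset_IG] saturation_IG by blast
  moreover have IG_L: "IG d E \<subseteq> ?sat (LG d E)"
    using assms by (rule IG_subset_saturation_LG)
  ultimately show "?sat (LG d E) = ?sat (JG d E)" and "?sat (JG d E) = ?sat ?I2"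
    and "?sat ?I2 = IG d E"
    by blast+
qed

theorem lemma4p1:
  fixes d :: nat and E :: "nat set set"
  assumes "simple_graph_on d E"
  shows "saturation (RG d E) (LG d E) (var {}) = saturation (RG d E) (JG d E) (var {})
       \<and> saturation (RG d E) (JG d E) (var {})
           = saturation (RG d E) (ideal_gen (RG d E) (homog_part 2 (IG d E))) (var {})
       \<and> saturation (RG d E) (ideal_gen (RG d E) (homog_part 2 (IG d E))) (var {})
           = (IG d E :: (nat set, 'k::field) mpoly set)"
  using saturations_eq_IG[OF stable_empty[OF assms]] by (intro conjI)

end
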